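(* Let $(G,\prec)$ be an $\mathcal{H}$-free ordered graph and let $V[x,y]$ be a valid segment. Then the set $S(x,y)\cup\{x,y\}$ induces a capped ordered subgraph of $(G,\prec)$.
   Context: An ordered graph is a pair $(G,\prec)$ with $G$ a finite graph and $\prec$ a linear order on $V(G)$; induced subgraphs carry the restricted order. It is capped if for any $a\prec b\prec c\prec d$ with $ac,bd\in E(G)$ we have $ad\in E(G)$. For $a\prec b\prec c\prec d$ with $ac,bd\in E(G)$, $ac$ crosses $bd$. A rotation of $\prec$ is any order obtained by repeatedly making the largest element the smallest. For $u\prec v$, a crossing sequence from $u$ to $v$ is a sequence of distinct edges $e_1,\dots,e_k$ with $u$ the smaller end of $e_1$, $v$ the larger end of $e_k$, and $e_i$ crossing $e_{i+1}$ for $1\le i<k$; if $v\prec u$, a crossing sequence from $u$ to $v$ is one with respect to any rotation $\prec'$ of $\prec$ with $u\prec'v$. $\mathcal{H}$ is the family of ordered graphs containing two non-adjacent vertices $u,v$ with a crossing sequence from $u$ to $v$ and one from $v$ to $u$; $\mathcal{H}$-free means no induced ordered subgraph lies in $\mathcal{H}$. For $x\prec y$, the segment $V[x,y]$ is the set of vertices $v$ with $x\preceq v\preceq y$; similarly $V[x,y)$, $V(x,y]$, $V(x,y)$ denote the half-open and open versions. $V[x,y]$ is valid if there is a crossing sequence from $y$ to $x$. A vertex $v$ is left-reachable from $V[x,y]$ if $v\in V[x,y)$ and there is a crossing sequence from $y$ to $v$; right-reachable if $v\in V(x,y]$ and there is a crossing sequence from $v$ to $x$; $S(x,y)$ denotes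 the set of vertices that are both left- and right-reachable from $V[x,y]$. *)

theory Defs
  imports Main
begin

text \<open>An ordered graph: a finite vertex set V of a linearly ordered type 'a
 (the linear order on V is the restriction of the type's order), with a
 symmetric irreflexive edge relation E. Induced subgraphs on W \<subseteq> V
 are represented by the vertex set W (edges and order restricted).\<close>

definition base_order :: "'a::linorder set \<Rightarrow> 'a \<Rightarrow> 'a \<Rightarrow> bool" where
  "base_order V u v \<longleftrightarrow> u \<in> V \<and> v \<in> V \<and> u < v"

definition largest :: "'a set \<Rightarrow> ('a \<Rightarrow> 'a \<Rightarrow> bool) \<Rightarrow> 'a" where
  "largest V lt = (THE m. m \<in> V \<and> (\<forall>w\<in>V. w \<noteq> m \<longrightarrow> lt w m))"

text \<open>One rotation step: the largest element becomes the smallest.\<close>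
definition rot1 :: "'a set \<Rightarrow> ('a \<Rightarrow> 'a \<Rightarrow> bool) \<Rightarrow> ('a \<Rightarrow> 'a \<Rightarrow> bool)" where
  "rot1 V lt u v \<longleftrightarrow> u \<in> V \<and> v \<in> V \<and>
     (if u = largest V lt then v \<noteq> largest V lt
      else if v = largest V lt then False else lt u v)"

definition rotation :: "'a::linorder set \<Rightarrow> ('a \<Rightarrow> 'a \<Rightarrow> bool) \<Rightarrow> bool" where
  "rotation V lt \<longleftrightarrow> (\<exists>k. lt = (rot1 V ^^ k) (base_order V))"

text \<open>Edge (a,c) crosses edge (b,d) w.r.t. lt (edges written smaller end first):
 a < b < c < d.\<close>
definition crosses :: "('a \<Rightarrow> 'a \<Rightarrow> bool) \<Rightarrow> 'a \<times> 'a \<Rightarrow> 'a \<times> 'a \<Rightarrow> bool" where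
  "crosses lt e f \<longleftrightarrow> lt (fst e) (fst f) \<and> lt (fst f) (snd e) \<and> lt (snd e) (snd f)"

definition cross_seq_wrt ::
  "'a set \<Rightarrow> ('a \<Rightarrow> 'a \<Rightarrow> bool) \<Rightarrow> ('a \<Rightarrow> 'a \<Rightarrow> bool) \<Rightarrow> 'a \<Rightarrow> 'a \<Rightarrow> ('a \<times> 'a) list \<Rightarrow> bool" where
  "cross_seq_wrt V E lt u v es \<longleftrightarrow>
     es \<noteq> [] \<and> distinct es \<and>
     (\<forall>e\<in>set es. fst e \<in> V \<and> snd e \<in> V \<and> E (fst e) (snd e) \<and> lt (fst e) (snd e)) \<and>
     fst (hd es) = u \<and> snd (last es) = v \<and>
     (\<forall>i. Suc i < length es \<longrightarrow> crosses lt (es ! i) (es ! Suc i))"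

definition has_cross_seq :: "'a::linorder set \<Rightarrow> ('a \<Rightarrow> 'a \<Rightarrow> bool) \<Rightarrow> 'a \<Rightarrow> 'a \<Rightarrow> bool" where
  "has_cross_seq V E u v \<longleftrightarrow>
     (u < v \<and> (\<exists>es. cross_seq_wrt V E (base_order V) u v es)) \<or>
     (v < u \<and> (\<exists>lt es. rotation V lt \<and> lt u v \<and> cross_seq_wrt V E lt u v es))"

definition in_H :: "'a::linorder set \<Rightarrow> ('a \<Rightarrow> 'a \<Rightarrow> bool) \<Rightarrow> bool" where
  "in_H V E \<longleftrightarrow> (\<exists>u\<in>V. \<exists>v\<in>V. u \<noteq> v \<and> \<not> E u v \<and>
                    has_cross_seq V E u v \<and> has_cross_seq V E v u)"

definition H_free :: "'a::linorder set \<Rightarrow> ('a \<Rightarrow> 'a \<Rightarrow> bool) \<Rightarrow> bool" where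
  "H_free V E \<longleftrightarrow> (\<forall>W. W \<subseteq> V \<longrightarrow> \<not> in_H W E)"

definition capped :: "'a::linorder set \<Rightarrow> ('a \<Rightarrow> 'a \<Rightarrow> bool) \<Rightarrow> bool" where
  "capped V E \<longleftrightarrow> (\<forall>a\<in>V. \<forall>b\<in>V. \<forall>c\<in>V. \<forall>d\<in>V.
      a < b \<and> b < c \<and> c < d \<and> E a c \<and> E b d \<longrightarrow> E a d)"

definition valid_segment :: "'a::linorder set \<Rightarrow> ('a \<Rightarrow> 'a \<Rightarrow> bool) \<Rightarrow> 'a \<Rightarrow> 'a \<Rightarrow> bool" where
  "valid_segment V E x y \<longleftrightarrow> x \<in> V \<and> y \<in> V \<and> x < y \<and> has_cross_seq V E y x"

definition left_reachable :: "'a::linorder set \<Rightarrow> ('a \<Rightarrow> 'a \<Rightarrow> bool) \<Rightarrow> 'a \<Rightarrow> 'a \<Rightarrow> 'a \<Rightarrow> bool" where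
  "left_reachable V E x y v \<longleftrightarrow> v \<in> V \<and> x \<le> v \<and> v < y \<and> has_cross_seq V E y v"

definition right_reachable :: "'a::linorder set \<Rightarrow> ('a \<Rightarrow> 'a \<Rightarrow> bool) \<Rightarrow> 'a \<Rightarrow> 'a \<Rightarrow> 'a \<Rightarrow> bool" where
  "right_reachable V E x y v \<longleftrightarrow> v \<in> V \<and> x < v \<and> v \<le> y \<and> has_cross_seq V E v x"

definition S_set :: "'a::linorder set \<Rightarrow> ('a \<Rightarrow> 'a \<Rightarrow> bool) \<Rightarrow> 'a \<Rightarrow> 'a \<Rightarrow> 'a set" where
  "S_set V E x y = {v. left_reachable V E x y v \<and> right_reachable V E x y v}"

end

(*
  Suppose a < b < c < d lie in S(x,y) \<union> {x,y} with ac and bd edges but ad not. The two edges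
  form a crossing sequence from a to d, so by H-freeness it suffices to find one from d to a.
  If a = x or d = y, it is provided by the validity of V[x,y] or by the reachability of a or d.
  Otherwise d reaches x and y reaches a; in the rotation starting at d these vertices come in
  the order d, y, x, a, and two crossing sequences whose ends interleave in this way merge into
  one from d to a: follow the first until one of its edges crosses an edge of the second, then
  follow the second. Any two rotations in which u precedes v order the cyclic interval from u
  to v identically, so a crossing sequence from u to v may be taken with respect to any such
  rotation; this puts both sequences in the same one.
*)

theory Submission
  imports Defs
begin

definition crossing_chain :: "('a \<Rightarrow> 'a \<Rightarrow> bool) \<Rightarrow> ('a \<times> 'a) list \<Rightarrow> bool" where
  "crossing_chain lt es \<longleftrightarrow> es \<noteq> [] \<and> successively (crosses lt) es"

lemma crossing_chain_Cons:
  "es \<noteq> [] \<Longrightarrow> crossing_chain lt (e # es) \<longleftrightarrow> crosses lt e (hd es) \<and> crossing_chain lt es"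
  by (cases es) (auto simp: crossing_chain_def)

lemma crossing_chain_bounds:
  assumes trans: "transp lt" and "crossing_chain lt es" and "e \<in> set es"
  shows "lt\<^sup>=\<^sup>= (fst (hd es)) (fst e) \<and> lt\<^sup>=\<^sup>= (snd e) (snd (last es))"
  using assms(2,3)
proof (induction es arbitrary: e)
  case Nil
  then show ?case by (simp add: crossing_chain_def)
next
  case (Cons f es)
  show ?case
  proof (cases "es = []")
    case True
    with Cons.prems show ?thesis by simp
  next
    case False
    with Cons.prems(1) have f: "crosses lt f (hd es)" and chain: "crossing_chain lt es"
      by (simp_all add: crossing_chain_Cons)
    have last: "lt\<^sup>=\<^sup>= (snd (hd es)) (snd (last es))"
      using Cons.IH[OF chain, of "hd es"] False by simp
    show ?thesis
    proof (cases "e = f")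
      case True
      with f last False show ?thesis by (auto simp: crosses_def intro: transpD[OF trans])
    next
      case False
      with Cons.prems(2) have "e \<in> set es" by simp
      from Cons.IH[OF chain this] f \<open>es \<noteq> []\<close> show ?thesis
        by (auto simp: crosses_def intro: transpD[OF trans])
    qed
  qed
qed

lemma crossing_chain_distinct:
  assumes "transp lt" and "irreflp lt" and "crossing_chain lt es"
  shows "distinct es"
  using assms(3)
proof (induction es)
  case (Cons e es)
  show ?case
  proof (cases "es = []")
    case False
    with Cons.prems have e: "crosses lt e (hd es)" and chain: "crossing_chain lt es"
      by (simp_all add: crossing_chain_Cons)
    have "e \<notin> set es"
    proof
      assume "e \<in> set es"
      with crossing_chain_bounds[OF assms(1) chain] have "lt\<^sup>=\<^sup>= (fst (hd es)) (fst e)" by blast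
      moreover have "lt (fst e) (fst (hd es))" using e by (simp add: crosses_def)
      ultimately show False using assms(1,2) by (auto dest: transpD simp: irreflp_def)
    qed
    with Cons.IH chain show ?thesis by simp
  qed simp
qed (simp add: crossing_chain_def)

lemma crossing_chain_extend:
  assumes trans: "transp lt" and total: "totalp_on V lt"
    and "crossing_chain lt B" and "set B \<subseteq> V \<times> V" and "snd e \<in> V"
    and "lt (fst e) (fst (hd B))" and "lt (fst (hd B)) (snd e)" and "lt (snd e) (snd (last B))"
  shows "\<exists>C. crossing_chain lt C \<and> hd C = e \<and> last C = last B \<and> set C \<subseteq> insert e (set B)"
  using assms(3-)
proof (induction B)
  case Nil
  then show ?case by (simp add: crossing_chain_def)
next
  case (Cons f B)
  show ?case
  proof (cases "lt (snd e) (snd f)")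
    case True
    with Cons.prems have "crossing_chain lt (e # f # B)"
      by (simp add: crossing_chain_Cons crosses_def)
    then show ?thesis by fastforce
  next
    case False
    have "snd f \<in> V" using Cons.prems(2) by auto
    with False total \<open>snd e \<in> V\<close> have f_e: "lt\<^sup>=\<^sup>= (snd f) (snd e)"
      by (auto simp: totalp_on_def)
    have "B \<noteq> []" using False Cons.prems(6) by auto
    with Cons.prems(1) have f: "crosses lt f (hd B)" and chain: "crossing_chain lt B"
      by (simp_all add: crossing_chain_Cons)
    have "lt (fst e) (fst (hd B))"
      using f Cons.prems(4) transpD[OF trans] by (auto simp: crosses_def)
    moreover have "lt (fst (hd B)) (snd e)"
      using f f_e transpD[OF trans] by (auto simp: crosses_def)
    moreover have "lt (snd e) (snd (last B))"
      using Cons.prems(6) \<open>B \<noteq> []\<close> by simp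
    ultimately obtain C where "crossing_chain lt C \<and> hd C = e \<and> last C = last B \<and> set C \<subseteq> insert e (set B)"
      using Cons.IH chain Cons.prems(2,3) by auto
    with \<open>B \<noteq> []\<close> show ?thesis by auto
  qed
qed

lemma crossing_chain_snd_last:
  assumes trans: "transp lt" and "crossing_chain lt (e # A)" and "A \<noteq> []"
  shows "lt (snd e) (snd (last A))"
proof -
  from assms(2,3) have "crosses lt e (hd A)" and chain: "crossing_chain lt A"
    by (simp_all add: crossing_chain_Cons)
  moreover have "lt\<^sup>=\<^sup>= (snd (hd A)) (snd (last A))"
    using crossing_chain_bounds[OF trans chain, of "hd A"] assms(3) by simp
  ultimately show ?thesis
    by (auto simp: crosses_def intro: transpD[OF trans])
qed

lemma crossing_chain_join:
  assumes trans: "transp lt" and total: "totalp_on V lt"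
    and "crossing_chain lt A" and "crossing_chain lt B" and "set A \<union> set B \<subseteq> V \<times> V"
    and "lt (fst (hd A)) (fst (hd B))" and "lt (fst (hd B)) (snd (last A))"
    and "lt (snd (last A)) (snd (last B))"
  shows "\<exists>C. crossing_chain lt C \<and> hd C = hd A \<and> last C = last B \<and> set C \<subseteq> set A \<union> set B"
  using assms(3-)
proof (induction A)
  case Nil
  then show ?case by (simp add: crossing_chain_def)
next
  case (Cons e A)
  show ?case
  proof (cases "A \<noteq> [] \<and> lt (fst (hd A)) (fst (hd B))")
    case True
    with Cons.prems(1) have e: "crosses lt e (hd A)" and chain: "crossing_chain lt A"
      by (simp_all add: crossing_chain_Cons)
    from True Cons.prems(3,5,6) have "set A \<union> set B \<subseteq> V \<times> V"
      "lt (fst (hd B)) (snd (last A))" "lt (snd (last A)) (snd (last B))"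
      by auto
    with Cons.IH[OF chain Cons.prems(2)] True obtain C where C: "crossing_chain lt C"
      "hd C = hd A" "last C = last B" "set C \<subseteq> set A \<union> set B"
      by blast
    then have "C \<noteq> []" by (simp add: crossing_chain_def)
    with C e have "crossing_chain lt (e # C)" by (simp add: crossing_chain_Cons)
    moreover have "last (e # C) = last B" "set (e # C) \<subseteq> set (e # A) \<union> set B"
      using C \<open>C \<noteq> []\<close> by auto
    ultimately show ?thesis by (metis list.sel(1))
  next
    case False
    have "lt (fst (hd B)) (snd e) \<and> lt (snd e) (snd (last B))"
    proof (cases "A = []")
      case True
      with Cons.prems(5,6) show ?thesis by simp
    next
      case False
      with \<open>\<not> (A \<noteq> [] \<and> lt (fst (hd A)) (fst (hd B)))\<close>
      have "\<not> lt (fst (hd A)) (fst (hd B))" by simp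
      moreover have "hd A \<in> V \<times> V" "hd B \<in> V \<times> V"
        using Cons.prems(2,3) False by (auto simp: crossing_chain_def)
      then have "fst (hd A) \<in> V" "fst (hd B) \<in> V"
        by auto
      ultimately have "lt\<^sup>=\<^sup>= (fst (hd B)) (fst (hd A))"
        using total by (auto simp: totalp_on_def)
      moreover have "crosses lt e (hd A)"
        using Cons.prems(1) False by (simp add: crossing_chain_Cons)
      moreover have "lt (snd e) (snd (last A))"
        using crossing_chain_snd_last[OF trans Cons.prems(1) False] .
      ultimately show ?thesis
        using Cons.prems(6) False by (auto simp: crosses_def intro: transpD[OF trans])
    qed
    moreover have "set B \<subseteq> V \<times> V" "snd e \<in> V"
      using Cons.prems(3) by auto
    moreover have "lt (fst e) (fst (hd B))"
      using Cons.prems(4) by simp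
    ultimately obtain C where "crossing_chain lt C" "hd C = e" "last C = last B"
      "set C \<subseteq> insert e (set B)"
      using crossing_chain_extend[OF trans total Cons.prems(2)] by blast
    then show ?thesis by (intro exI[of _ C]) auto
  qed
qed

lemma cross_seq_wrt_iff_crossing_chain:
  "cross_seq_wrt V E lt u v es \<longleftrightarrow> crossing_chain lt es \<and> distinct es \<and>
     (\<forall>e\<in>set es. fst e \<in> V \<and> snd e \<in> V \<and> E (fst e) (snd e) \<and> lt (fst e) (snd e)) \<and>
     fst (hd es) = u \<and> snd (last es) = v"
  by (auto simp: cross_seq_wrt_def crossing_chain_def successively_conv_nth)

lemma cross_seq_wrt_join:
  assumes "transp lt" and "irreflp lt" and "totalp_on V lt"
    and "cross_seq_wrt V E lt p q A" and "cross_seq_wrt V E lt p' q' B"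
    and "lt p p'" and "lt p' q" and "lt q q'"
  shows "\<exists>C. cross_seq_wrt V E lt p q' C"
proof -
  have A: "crossing_chain lt A" "fst (hd A) = p" "snd (last A) = q"
    and B: "crossing_chain lt B" "fst (hd B) = p'" "snd (last B) = q'"
    using assms(4,5) by (simp_all add: cross_seq_wrt_iff_crossing_chain)
  have "set A \<union> set B \<subseteq> V \<times> V"
    using assms(4,5) by (auto simp: cross_seq_wrt_def)
  from crossing_chain_join[OF assms(1,3) A(1) B(1) this] assms(6-8) A B
  obtain C where C: "crossing_chain lt C" "hd C = hd A" "last C = last B" "set C \<subseteq> set A \<union> set B"
    by auto
  have "\<forall>e\<in>set C. fst e \<in> V \<and> snd e \<in> V \<and> E (fst e) (snd e) \<and> lt (fst e) (snd e)"
    using C(4) assms(4,5) unfolding cross_seq_wrt_def by blast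
  with C A B crossing_chain_distinct[OF assms(1,2) C(1)] have "cross_seq_wrt V E lt p q' C"
    by (simp add: cross_seq_wrt_iff_crossing_chain)
  then show ?thesis ..
qed

text \<open>The rotation of the order on V that starts at r: the elements from r upward in
  increasing order, followed by the elements below r in increasing order.\<close>
definition rot_order :: "'a::linorder set \<Rightarrow> 'a \<Rightarrow> 'a \<Rightarrow> 'a \<Rightarrow> bool" where
  "rot_order V r u v \<longleftrightarrow> u \<in> V \<and> v \<in> V \<and> (if (r \<le> u) = (r \<le> v) then u < v else r \<le> u)"

lemma transp_rot_order: "transp (rot_order V r)"
  by (auto simp: transp_def rot_order_def split: if_splits)

lemma irreflp_rot_order: "irreflp (rot_order V r)"
  by (simp add: irreflp_def rot_order_def)

lemma totalp_on_rot_order: "totalp_on V (rot_order V r)"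
  by (auto simp: totalp_on_def rot_order_def)

lemma base_order_eq_rot_order_Min: "finite V \<Longrightarrow> base_order V = rot_order V (Min V)"
  by (auto simp: base_order_def rot_order_def intro!: ext)

definition cyc_pred :: "'a::linorder set \<Rightarrow> 'a \<Rightarrow> 'a" where
  "cyc_pred V r = (if \<exists>v\<in>V. v < r then Max {v\<in>V. v < r} else Max V)"

lemma cyc_pred_in:
  assumes "finite V" and "r \<in> V"
  shows "cyc_pred V r \<in> V"
proof -
  from assms(2) have "V \<noteq> {}" by auto
  with assms(1) show ?thesis
    using Max_in[of "{v\<in>V. v < r}"] Max_in[of V] by (auto simp: cyc_pred_def)
qed

lemma cyc_pred_cases:
  assumes "finite V" and "r \<in> V"
  obtains "cyc_pred V r < r" and "\<And>w. w \<in> V \<Longrightarrow> w < r \<Longrightarrow> w \<le> cyc_pred V r"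
    | "\<And>w. w \<in> V \<Longrightarrow> r \<le> w" and "\<And>w. w \<in> V \<Longrightarrow> w \<le> cyc_pred V r"
proof (cases "\<exists>v\<in>V. v < r")
  case True
  have "Max {v\<in>V. v < r} \<in> {v\<in>V. v < r}"
    using True assms(1) by (intro Max_in) auto
  with True have "cyc_pred V r \<in> {v\<in>V. v < r}"
    by (simp add: cyc_pred_def)
  moreover have "w \<le> cyc_pred V r" if "w \<in> V" "w < r" for w
    unfolding cyc_pred_def using True that assms(1) by (simp add: Max_ge)
  ultimately show ?thesis
    using that(1) by simp
next
  case False
  then have "cyc_pred V r = Max V"
    by (simp add: cyc_pred_def)
  with False show ?thesis
    using that(2) assms(1) by (simp add: not_less)
qed

lemma rot_order_cyc_pred_last:
  assumes "finite V" and "r \<in> V" and "w \<in> V" and "w \<noteq> cyc_pred V r"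
  shows "rot_order V r w (cyc_pred V r)"
  using assms(1,2)
proof (cases rule: cyc_pred_cases)
  case 1
  then show ?thesis
    using assms cyc_pred_in[OF assms(1,2)] 1(2)[OF assms(3)] by (auto simp: rot_order_def not_le order_less_le)
next
  case 2
  then show ?thesis
    using assms cyc_pred_in[OF assms(1,2)] 2(2)[OF assms(3)] by (auto simp: rot_order_def order_less_le)
qed

lemma rot_order_cyc_pred_iff:
  assumes "finite V" and "r \<in> V"
  shows "rot_order V (cyc_pred V r) u v \<longleftrightarrow>
    u \<in> V \<and> v \<in> V \<and> (if u = cyc_pred V r then v \<noteq> cyc_pred V r
                       else v \<noteq> cyc_pred V r \<and> rot_order V r u v)"
  using assms
proof (cases rule: cyc_pred_cases)
  case 1
  have key: "cyc_pred V r \<le> w \<longleftrightarrow> r \<le> w" if "w \<in> V" "w \<noteq> cyc_pred V r" for w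
    using 1 that by (metis not_le order_le_less order.strict_trans)
  show ?thesis
    using 1(1) key[of u] key[of v] by (auto simp: rot_order_def)
next
  case 2
  have key: "\<not> cyc_pred V r \<le> w" if "w \<in> V" "w \<noteq> cyc_pred V r" for w
    using 2 that by (metis order.antisym)
  show ?thesis
    using 2(1) key[of u] key[of v] by (auto simp: rot_order_def)
qed

lemma largest_rot_order:
  assumes "finite V" and "r \<in> V"
  shows "largest V (rot_order V r) = cyc_pred V r"
  unfolding largest_def
proof (rule the_equality)
  show "cyc_pred V r \<in> V \<and> (\<forall>w\<in>V. w \<noteq> cyc_pred V r \<longrightarrow> rot_order V r w (cyc_pred V r))"
    using assms by (simp add: cyc_pred_in rot_order_cyc_pred_last)
next
  fix m
  assume m: "m \<in> V \<and> (\<forall>w\<in>V. w \<noteq> m \<longrightarrow> rot_order V r w m)"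
  show "m = cyc_pred V r"
  proof (rule ccontr)
    assume "m \<noteq> cyc_pred V r"
    with m assms have "rot_order V r (cyc_pred V r) m" "rot_order V r m (cyc_pred V r)"
      by (simp_all add: cyc_pred_in rot_order_cyc_pred_last)
    then show False
      using transp_rot_order irreflp_rot_order by (metis irreflpD transpD)
  qed
qed

lemma rot1_rot_order:
  assumes "finite V" and "r \<in> V"
  shows "rot1 V (rot_order V r) = rot_order V (cyc_pred V r)"
  using assms by (simp add: rot1_def largest_rot_order rot_order_cyc_pred_iff fun_eq_iff)

lemma rotation_imp_rot_order:
  assumes "finite V" and "V \<noteq> {}" and "rotation V lt"
  shows "\<exists>r\<in>V. lt = rot_order V r"
proof -
  have "\<exists>r\<in>V. (rot1 V ^^ k) (base_order V) = rot_order V r" for k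
  proof (induction k)
    case 0
    show ?case
      using assms(1,2) Min_in by (auto simp: base_order_eq_rot_order_Min)
  next
    case (Suc k)
    then show ?case
      using assms(1) by (auto simp: rot1_rot_order cyc_pred_in)
  qed
  with assms(3) show ?thesis
    by (auto simp: rotation_def)
qed

lemma rotation_rot_order:
  assumes "finite V"
  shows "r \<in> V \<Longrightarrow> rotation V (rot_order V r)"
proof (induction "card {v\<in>V. r < v}" arbitrary: r rule: less_induct)
  case less
  then have "V \<noteq> {}" by auto
  show ?case
  proof (cases "\<exists>v\<in>V. r < v")
    case False
    with less.prems assms have "r = Max V"
      by (intro Max_eqI[symmetric]) (auto simp: not_less)
    moreover have "cyc_pred V (Min V) = Max V"
      unfolding cyc_pred_def using Min_le[OF assms] by (metis leD)
    ultimately have "rot1 V (base_order V) = rot_order V r"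
      using assms \<open>V \<noteq> {}\<close> by (simp add: base_order_eq_rot_order_Min rot1_rot_order)
    then show ?thesis
      unfolding rotation_def by (metis funpow_0 funpow_Suc_right comp_apply)
  next
    case True
    define s where "s = Min {v\<in>V. r < v}"
    have "s \<in> {v\<in>V. r < v}"
      unfolding s_def using True assms by (intro Min_in) auto
    then have s: "s \<in> V" "r < s" by auto
    have s_least: "s \<le> v" if "v \<in> V" "r < v" for v
      unfolding s_def using that assms by (intro Min_le) auto
    have "card {v\<in>V. s < v} < card {v\<in>V. r < v}"
      using s assms by (intro psubset_card_mono) auto
    with less.hyps s obtain k where k: "rot_order V s = (rot1 V ^^ k) (base_order V)"
      by (auto simp: rotation_def)
    have "Max {v\<in>V. v < s} = r"
      using less.prems s s_least assms by (intro Max_eqI) (auto simp: not_le[symmetric])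
    then have "cyc_pred V s = r"
      using less.prems s by (auto simp: cyc_pred_def)
    then have "rot_order V r = (rot1 V ^^ Suc k) (base_order V)"
      using rot1_rot_order[OF assms s(1)] k by simp
    then show ?thesis
      unfolding rotation_def ..
  qed
qed

lemma rot_order_agree:
  assumes "rot_order V r u v" and "rot_order V s u v"
    and "(rot_order V r)\<^sup>=\<^sup>= u w" and "(rot_order V r)\<^sup>=\<^sup>= w v"
    and "(rot_order V r)\<^sup>=\<^sup>= u w'" and "(rot_order V r)\<^sup>=\<^sup>= w' v"
  shows "rot_order V r w w' \<longleftrightarrow> rot_order V s w w'"
  using assms unfolding rot_order_def by (auto split: if_splits)

lemma cross_seq_wrt_rot_order_transfer:
  assumes seq: "cross_seq_wrt V E (rot_order V r) u v es" and "rot_order V s u v"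
  shows "cross_seq_wrt V E (rot_order V s) u v es"
proof -
  let ?R = "rot_order V r" and ?S = "rot_order V s"
  have rot_trans: "?R a b \<Longrightarrow> ?R b c \<Longrightarrow> ?R a c" for a b c
    using transp_rot_order by (rule transpD)
  from seq have chain: "crossing_chain ?R es" and "es \<noteq> []"
    and edges: "\<forall>e\<in>set es. ?R (fst e) (snd e)"
    and ends: "fst (hd es) = u" "snd (last es) = v"
    by (auto simp: cross_seq_wrt_iff_crossing_chain crossing_chain_def)
  define between where "between w \<longleftrightarrow> ?R\<^sup>=\<^sup>= u w \<and> ?R\<^sup>=\<^sup>= w v" for w
  have between_ends: "between (fst e) \<and> between (snd e)" if "e \<in> set es" for e
    using crossing_chain_bounds[OF transp_rot_order chain that] edges that ends
    unfolding between_def by (auto intro: rot_trans)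
  have "?R u (snd (hd es))"
    using edges \<open>es \<noteq> []\<close> ends by auto
  moreover have "?R\<^sup>=\<^sup>= (snd (hd es)) v"
    using between_ends[of "hd es"] \<open>es \<noteq> []\<close> unfolding between_def by simp
  ultimately have "?R u v"
    by (auto intro: rot_trans)
  then have agree: "?R w w' \<longleftrightarrow> ?S w w'" if "between w" "between w'" for w w'
    using rot_order_agree[OF _ assms(2)] that unfolding between_def by blast
  have "crosses ?R e f \<longleftrightarrow> crosses ?S e f" if "e \<in> set es" "f \<in> set es" for e f
    using agree between_ends that unfolding crosses_def by metis
  with chain have "crossing_chain ?S es"
    unfolding crossing_chain_def by (auto elim: successively_mono)
  moreover have "\<forall>e\<in>set es. ?S (fst e) (snd e)"
    using edges agree between_ends by blast
  ultimately show ?thesis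
    using seq by (auto simp: cross_seq_wrt_iff_crossing_chain)
qed

lemma has_cross_seq_iff_rot_order:
  assumes "finite V" and "r \<in> V" and "rot_order V r u v"
  shows "has_cross_seq V E u v \<longleftrightarrow> (\<exists>es. cross_seq_wrt V E (rot_order V r) u v es)"
proof
  assume "has_cross_seq V E u v"
  then obtain s es where "cross_seq_wrt V E (rot_order V s) u v es"
    using assms(1,2) rotation_imp_rot_order[of V]
    unfolding has_cross_seq_def base_order_eq_rot_order_Min[OF assms(1)] by blast
  then show "\<exists>es. cross_seq_wrt V E (rot_order V r) u v es"
    using cross_seq_wrt_rot_order_transfer assms(3) by blast
next
  assume "\<exists>es. cross_seq_wrt V E (rot_order V r) u v es"
  then obtain es where seq: "cross_seq_wrt V E (rot_order V r) u v es" ..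
  have "u \<in> V" "v \<in> V" "u \<noteq> v"
    using assms(3) by (auto simp: rot_order_def)
  then consider "u < v" | "v < u" by fastforce
  then show "has_cross_seq V E u v"
  proof cases
    case 1
    with \<open>u \<in> V\<close> \<open>v \<in> V\<close> assms(1) have "rot_order V (Min V) u v"
      by (auto simp: rot_order_def)
    with seq have "cross_seq_wrt V E (base_order V) u v es"
      by (simp add: base_order_eq_rot_order_Min[OF assms(1)] cross_seq_wrt_rot_order_transfer)
    with 1 show ?thesis
      unfolding has_cross_seq_def by blast
  next
    case 2
    with seq assms show ?thesis
      unfolding has_cross_seq_def using rotation_rot_order by blast
  qed
qed

lemma has_cross_seq_join:
  assumes "finite V" and "r \<in> V"
    and "rot_order V r p p'" and "rot_order V r p' q" and "rot_order V r q q'"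
    and "has_cross_seq V E p q" and "has_cross_seq V E p' q'"
  shows "has_cross_seq V E p q'"
proof -
  have rot_trans: "rot_order V r a b \<Longrightarrow> rot_order V r b c \<Longrightarrow> rot_order V r a c" for a b c
    using transp_rot_order by (rule transpD)
  have "rot_order V r p q" "rot_order V r p' q'" "rot_order V r p q'"
    using assms(3-5) by (blast intro: rot_trans)+
  then obtain A B where "cross_seq_wrt V E (rot_order V r) p q A" "cross_seq_wrt V E (rot_order V r) p' q' B"
    using assms(6,7) has_cross_seq_iff_rot_order[OF assms(1,2)] by metis
  then have "\<exists>C. cross_seq_wrt V E (rot_order V r) p q' C"
    using cross_seq_wrt_join[OF transp_rot_order irreflp_rot_order totalp_on_rot_order] assms(3-5)
    by blast
  with \<open>rot_order V r p q'\<close> show ?thesis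
    using has_cross_seq_iff_rot_order[OF assms(1,2)] by blast
qed

lemma has_cross_seq_crossing_edges:
  assumes "{a, b, c, d} \<subseteq> V" and "a < b" and "b < c" and "c < d" and "E a c" and "E b d"
  shows "has_cross_seq V E a d"
proof -
  have "cross_seq_wrt V E (base_order V) a d [(a, c), (b, d)]"
    using assms by (auto simp: cross_seq_wrt_def crosses_def base_order_def nth_Cons split: nat.splits)
  with assms(2-4) show ?thesis
    unfolding has_cross_seq_def by force
qed

lemma has_cross_seq_back_in_segment:
  assumes "finite V" and "valid_segment V E x y"
    and "a \<in> S_set V E x y \<union> {x, y}" and "d \<in> S_set V E x y \<union> {x, y}" and "a < d"
  shows "has_cross_seq V E d a"
proof -
  have xy: "x \<in> V" "y \<in> V" "x < y" "has_cross_seq V E y x"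
    using assms(2) by (auto simp: valid_segment_def)
  have S: "v \<in> V" "x < v" "v < y" "has_cross_seq V E y v" "has_cross_seq V E v x"
    if "v \<in> S_set V E x y" for v
    using that by (auto simp: S_set_def left_reachable_def right_reachable_def)
  have "a \<noteq> y" "d \<noteq> x"
    using assms(3-5) xy(3) S(2,3) by fastforce+
  with assms(3,4) consider "a = x" "d = y" | "a = x" "d \<in> S_set V E x y"
    | "a \<in> S_set V E x y" "d = y" | "a \<in> S_set V E x y" "d \<in> S_set V E x y"
    by blast
  then show ?thesis
  proof cases
    case 1
    with xy show ?thesis by simp
  next
    case 2
    with S(5) show ?thesis by simp
  next
    case 3
    with S(4) show ?thesis by simp
  next
    case 4
    with S(1-3) have "a \<in> V" "x < a" "d \<in> V" "d < y"
      by blast+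
    with xy(1,2) assms(5) have "rot_order V d d y" "rot_order V d y x" "rot_order V d x a"
      by (auto simp: rot_order_def)
    moreover have "has_cross_seq V E d x" "has_cross_seq V E y a"
      using 4 S(4,5) by blast+
    ultimately show ?thesis
      using has_cross_seq_join[OF assms(1) \<open>d \<in> V\<close>] by blast
  qed
qed

theorem lemma4p4:
  fixes V :: "'a::linorder set" and E :: "'a \<Rightarrow> 'a \<Rightarrow> bool" and x y :: 'a
  assumes "finite V"
    and "\<And>u v. E u v \<Longrightarrow> E v u"
    and "\<And>u. \<not> E u u"
    and "H_free V E"
    and "valid_segment V E x y"
  shows "capped (S_set V E x y \<union> {x, y}) E"
proof -
  let ?T = "S_set V E x y \<union> {x, y}"
  have "?T \<subseteq> V"
    using assms(5) by (auto simp: valid_segment_def S_set_def left_reachable_def)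
  have "E a d"
    if "{a, b, c, d} \<subseteq> ?T" and "a < b" "b < c" "c < d" "E a c" "E b d" for a b c d
  proof (rule ccontr)
    assume "\<not> E a d"
    have "{a, b, c, d} \<subseteq> V" "a < d" "a \<in> ?T" "d \<in> ?T"
      using that(1-4) \<open>?T \<subseteq> V\<close> by auto
    then have "a \<in> V" "d \<in> V" "a \<noteq> d"
      by auto
    have "has_cross_seq V E a d"
      by (rule has_cross_seq_crossing_edges) fact+
    moreover have "has_cross_seq V E d a"
      using has_cross_seq_back_in_segment[OF assms(1,5)] \<open>a \<in> ?T\<close> \<open>d \<in> ?T\<close> \<open>a < d\<close> .
    ultimately have "in_H V E"
      using \<open>a \<in> V\<close> \<open>d \<in> V\<close> \<open>a \<noteq> d\<close> \<open>\<not> E a d\<close> unfolding in_H_def by blast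
    with assms(4) show False
      unfolding H_free_def by blast
  qed
  then show ?thesis
    unfolding capped_def by blast
qed

end
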